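(* Let $X$ be a connected bipartite graph with $n$ vertices and $m\ge n$ edges, and let $\{a,b\}\neq\{\alpha,\beta\}$ be edges of $X$. If $\mathbf f_{ab}$ and $\mathbf f_{\alpha\beta}$ are strongly cospectral with respect to the adjacency matrix of the line graph $\mathcal L(X)$, then $\{\{a,b\},\{\alpha,\beta\}\}$ is an edge-cut of $X$ (i.e. deleting these two edges disconnects $X$).
   Context: The line graph $\mathcal L(X)$ has vertex set $E(X)$ with edges adjacent iff they share an endpoint; $\mathbf f_{ab}$ is the vertex state of the vertex corresponding to $\{a,b\}$. For $M=\sum_\theta\theta F_\theta$ (orthogonal spectral projections), vectors $\mathbf x,\mathbf y$ are strongly cospectral if $F_\theta\mathbf x=\pm F_\theta\mathbf y$ for every eigenvalue $\theta$. *)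

theory Defs
  imports Complex_Main
begin

definition simple_graph :: "'v set \<Rightarrow> 'v set set \<Rightarrow> bool" where
  "simple_graph V E \<longleftrightarrow> finite V \<and>
     (\<forall>e\<in>E. \<exists>x y. x \<in> V \<and> y \<in> V \<and> x \<noteq> y \<and> e = {x, y})"

definition graph_connected :: "'v set \<Rightarrow> 'v set set \<Rightarrow> bool" where
  "graph_connected V E \<longleftrightarrow> V \<noteq> {} \<and>
     (\<forall>u\<in>V. \<forall>v\<in>V. (\<lambda>x y. {x, y} \<in> E)\<^sup>*\<^sup>* u v)"

definition bipartite :: "'v set \<Rightarrow> 'v set set \<Rightarrow> bool" where
  "bipartite V E \<longleftrightarrow> (\<exists>c :: 'v \<Rightarrow> bool. \<forall>x\<in>V. \<forall>y\<in>V. {x, y} \<in> E \<longrightarrow> c x \<noteq> c y)"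

definition line_adj :: "'v set set \<Rightarrow> 'v set \<Rightarrow> 'v set \<Rightarrow> real" where
  "line_adj E e f = (if e \<in> E \<and> f \<in> E \<and> e \<noteq> f \<and> e \<inter> f \<noteq> {} then 1 else 0)"

text \<open>Vectors in R^I are functions vanishing outside the index set I.\<close>
definition inner_on :: "'i set \<Rightarrow> ('i \<Rightarrow> real) \<Rightarrow> ('i \<Rightarrow> real) \<Rightarrow> real" where
  "inner_on I x y = (\<Sum>i\<in>I. x i * y i)"

definition eigenspace_on :: "'i set \<Rightarrow> ('i \<Rightarrow> 'i \<Rightarrow> real) \<Rightarrow> real \<Rightarrow> ('i \<Rightarrow> real) set" where
  "eigenspace_on I M \<theta> = {x. (\<forall>i. i \<notin> I \<longrightarrow> x i = 0) \<and>
       (\<forall>i\<in>I. (\<Sum>j\<in>I. M i j * x j) = \<theta> * x i)}"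

definition is_eigenvalue_on :: "'i set \<Rightarrow> ('i \<Rightarrow> 'i \<Rightarrow> real) \<Rightarrow> real \<Rightarrow> bool" where
  "is_eigenvalue_on I M \<theta> \<longleftrightarrow> (\<exists>x\<in>eigenspace_on I M \<theta>. x \<noteq> (\<lambda>_. 0))"

text \<open>F_theta: orthogonal projection onto the theta-eigenspace (spectral idempotent
  of the symmetric matrix M = sum_theta theta F_theta).\<close>
definition spectral_proj :: "'i set \<Rightarrow> ('i \<Rightarrow> 'i \<Rightarrow> real) \<Rightarrow> real \<Rightarrow> ('i \<Rightarrow> real) \<Rightarrow> ('i \<Rightarrow> real)" where
  "spectral_proj I M \<theta> x = (THE p. p \<in> eigenspace_on I M \<theta> \<and>
       (\<forall>w\<in>eigenspace_on I M \<theta>. inner_on I (\<lambda>i. x i - p i) w = 0))"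

definition strongly_cospectral :: "'i set \<Rightarrow> ('i \<Rightarrow> 'i \<Rightarrow> real) \<Rightarrow> ('i \<Rightarrow> real) \<Rightarrow> ('i \<Rightarrow> real) \<Rightarrow> bool" where
  "strongly_cospectral I M x y \<longleftrightarrow>
     (\<forall>\<theta>. is_eigenvalue_on I M \<theta> \<longrightarrow>
        spectral_proj I M \<theta> x = spectral_proj I M \<theta> y \<or>
        spectral_proj I M \<theta> x = (\<lambda>i. - spectral_proj I M \<theta> y i))"

definition vertex_state :: "'i \<Rightarrow> ('i \<Rightarrow> real)" where
  "vertex_state e = (\<lambda>i. if i = e then 1 else 0)"

end

theory Submission
  imports Defs
begin

text \<open>If deleting the two edges left X connected, a walk from a to b avoiding them, closed up
  by the edge {a,b}, carries a vector with alternating signs (X is bipartite) in the kernel of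
  the unsigned vertex-edge incidence matrix N. Since the adjacency matrix of the line graph is
  N^T N - 2I, this vector z is an eigenvector of L(X) for the eigenvalue -2. Orthogonal
  projection onto the eigenspace preserves inner products with z, so strong cospectrality
  forces |z {a,b}| = |z {\<alpha>,\<beta>}|; but z vanishes on {\<alpha>,\<beta>} and not on {a,b}.\<close>

definition subspace_on :: "'i set \<Rightarrow> ('i \<Rightarrow> real) set \<Rightarrow> bool" where
  "subspace_on I W \<longleftrightarrow> (\<lambda>_. 0) \<in> W \<and> (\<forall>x\<in>W. \<forall>y\<in>W. \<forall>c. (\<lambda>i. x i + c * y i) \<in> W)
     \<and> (\<forall>x\<in>W. \<forall>i. i \<notin> I \<longrightarrow> x i = 0)"

lemma subspace_on_zero: "subspace_on I W \<Longrightarrow> (\<lambda>_. 0) \<in> W"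
  unfolding subspace_on_def by blast

lemma subspace_on_add_scaled:
  "subspace_on I W \<Longrightarrow> x \<in> W \<Longrightarrow> y \<in> W \<Longrightarrow> (\<lambda>i. x i + c * y i) \<in> W"
  unfolding subspace_on_def by blast

lemma subspace_on_diff: "subspace_on I W \<Longrightarrow> x \<in> W \<Longrightarrow> y \<in> W \<Longrightarrow> (\<lambda>i. x i - y i) \<in> W"
  using subspace_on_add_scaled[of I W x y "-1"] by simp

lemma subspace_on_vanishes: "subspace_on I W \<Longrightarrow> x \<in> W \<Longrightarrow> i \<notin> I \<Longrightarrow> x i = 0"
  unfolding subspace_on_def by blast

lemma eigenspace_on_subspace: "subspace_on I (eigenspace_on I M \<theta>)"
  unfolding subspace_on_def
proof (intro conjI ballI allI impI)
  show "(\<lambda>_. 0) \<in> eigenspace_on I M \<theta>" unfolding eigenspace_on_def by simp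
next
  fix x y c assume x: "x \<in> eigenspace_on I M \<theta>" and y: "y \<in> eigenspace_on I M \<theta>"
  have "(\<Sum>j\<in>I. M i j * (x j + c * y j)) = \<theta> * (x i + c * y i)" if "i \<in> I" for i
  proof -
    have "(\<Sum>j\<in>I. M i j * (x j + c * y j)) = (\<Sum>j\<in>I. M i j * x j) + c * (\<Sum>j\<in>I. M i j * y j)"
      by (simp add: sum.distrib sum_distrib_left distrib_left mult.left_commute)
    also have "\<dots> = \<theta> * (x i + c * y i)"
      using x y that unfolding eigenspace_on_def by (simp add: distrib_left)
    finally show ?thesis .
  qed
  then show "(\<lambda>i. x i + c * y i) \<in> eigenspace_on I M \<theta>"
    using x y unfolding eigenspace_on_def by auto
next
  fix x i assume "x \<in> eigenspace_on I M \<theta>" "i \<notin> I"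
  then show "x i = 0" unfolding eigenspace_on_def by auto
qed

lemma inner_on_add_scaled_left:
  "inner_on I (\<lambda>i. x i + c * y i) w = inner_on I x w + c * inner_on I y w"
  unfolding inner_on_def by (simp add: distrib_right sum.distrib sum_distrib_left mult.assoc)

lemma inner_on_add_scaled_right:
  "inner_on I w (\<lambda>i. x i + c * y i) = inner_on I w x + c * inner_on I w y"
  unfolding inner_on_def by (simp add: distrib_left sum.distrib sum_distrib_left mult.left_commute)

lemma inner_on_diff_left: "inner_on I (\<lambda>i. x i - y i) w = inner_on I x w - inner_on I y w"
  unfolding inner_on_def by (simp add: left_diff_distrib sum_subtractf)

lemma inner_on_neg_left: "inner_on I (\<lambda>i. - x i) w = - inner_on I x w"
  unfolding inner_on_def by (simp add: sum_negf)

lemma inner_on_self_pos: "finite I \<Longrightarrow> s \<in> I \<Longrightarrow> x s \<noteq> 0 \<Longrightarrow> inner_on I x x > 0"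
  unfolding inner_on_def by (rule sum_pos2) (auto simp: zero_less_mult_iff linorder_neq_iff)

lemma inner_on_vertex_state: "finite I \<Longrightarrow> e \<in> I \<Longrightarrow> inner_on I (vertex_state e) w = w e"
proof -
  assume "finite I" "e \<in> I"
  have "inner_on I (vertex_state e) w = (\<Sum>i\<in>I. if i = e then w i else 0)"
    unfolding inner_on_def vertex_state_def by (rule sum.cong) auto
  with \<open>finite I\<close> \<open>e \<in> I\<close> show ?thesis by simp
qed

lemma orthogonal_projection_add_direction:
  assumes "\<forall>w\<in>W0. inner_on I (\<lambda>i. x i - p0 i) w = 0" "\<forall>w\<in>W0. inner_on I u w = 0"
    and "inner_on I u u \<noteq> 0" and "\<forall>w\<in>W. \<exists>w0\<in>W0. \<exists>c. w = (\<lambda>i. w0 i + c * u i)"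
  shows "\<exists>k. \<forall>w\<in>W. inner_on I (\<lambda>i. x i - (p0 i + k * u i)) w = 0"
proof (intro exI ballI)
  define k where "k = inner_on I (\<lambda>i. x i - p0 i) u / inner_on I u u"
  fix w assume "w \<in> W"
  then obtain w0 c where "w0 \<in> W0" and w: "w = (\<lambda>i. w0 i + c * u i)" using assms(4) by blast
  have "inner_on I (\<lambda>i. x i - (p0 i + k * u i)) w0 = 0"
    using assms(1,2) \<open>w0 \<in> W0\<close> by (simp add: inner_on_diff_left inner_on_add_scaled_left)
  moreover have "inner_on I (\<lambda>i. x i - (p0 i + k * u i)) u
      = inner_on I (\<lambda>i. x i - p0 i) u - k * inner_on I u u"
    by (simp only: inner_on_diff_left inner_on_add_scaled_left)
  then have "inner_on I (\<lambda>i. x i - (p0 i + k * u i)) u = 0"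
    using assms(3) unfolding k_def by simp
  ultimately show "inner_on I (\<lambda>i. x i - (p0 i + k * u i)) w = 0"
    unfolding w by (simp add: inner_on_add_scaled_right)
qed

lemma orthogonal_projection_exists:
  assumes "finite I" "S \<subseteq> I" "subspace_on S W"
  shows "\<exists>p\<in>W. \<forall>w\<in>W. inner_on I (\<lambda>i. x i - p i) w = 0"
  using finite_subset[OF assms(2,1)] assms(2,3)
proof (induction S arbitrary: W x rule: finite_induct)
  case empty
  then have "W = {\<lambda>_. 0}"
    using subspace_on_zero subspace_on_vanishes by fastforce
  then show ?case by (simp add: inner_on_def)
next
  case (insert s S W x)
  define W0 where "W0 = {w\<in>W. w s = 0}"
  have "subspace_on S W0"
    using insert.prems(2) unfolding subspace_on_def W0_def by auto
  then have proj0: "\<And>y. \<exists>p\<in>W0. \<forall>w\<in>W0. inner_on I (\<lambda>i. y i - p i) w = 0"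
    using insert.IH insert.prems(1) by auto
  show ?case
  proof (cases "W0 = W")
    case True
    then show ?thesis using proj0 by auto
  next
    case False
    \<comment> \<open>W is W0 plus one direction u', which we take orthogonal to W0.\<close>
    then obtain u where u: "u \<in> W" "u s \<noteq> 0" unfolding W0_def by auto
    obtain q where q: "q \<in> W0" "\<forall>w\<in>W0. inner_on I (\<lambda>i. u i - q i) w = 0"
      using proj0 by blast
    define u' where "u' = (\<lambda>i. u i - q i)"
    have u'W: "u' \<in> W" and u's: "u' s \<noteq> 0"
      using subspace_on_diff[OF insert.prems(2) u(1)] q(1) u unfolding u'_def W0_def by auto
    have "inner_on I u' u' \<noteq> 0"
      using inner_on_self_pos[of I s u'] \<open>finite I\<close> u's insert.prems(1) by auto
    moreover have "\<exists>w0\<in>W0. \<exists>c. w = (\<lambda>i. w0 i + c * u' i)" if "w \<in> W" for w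
    proof (intro bexI exI)
      let ?c = "w s / u' s"
      show "w = (\<lambda>i. (w i + (- ?c) * u' i) + ?c * u' i)" by simp
      show "(\<lambda>i. w i + (- ?c) * u' i) \<in> W0"
        using subspace_on_add_scaled[OF insert.prems(2) that u'W, of "- ?c"] u's
        unfolding W0_def by simp
    qed
    moreover obtain p0 where "p0 \<in> W0" "\<forall>w\<in>W0. inner_on I (\<lambda>i. x i - p0 i) w = 0"
      using proj0 by blast
    moreover have "\<forall>w\<in>W0. inner_on I u' w = 0" using q(2) unfolding u'_def by simp
    ultimately obtain k where "\<forall>w\<in>W. inner_on I (\<lambda>i. x i - (p0 i + k * u' i)) w = 0"
      using orthogonal_projection_add_direction[of W0 I x p0 u' W] by blast
    moreover have "(\<lambda>i. p0 i + k * u' i) \<in> W"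
      using subspace_on_add_scaled[OF insert.prems(2) _ u'W] \<open>p0 \<in> W0\<close> unfolding W0_def by auto
    ultimately show ?thesis by (intro bexI[of _ "\<lambda>i. p0 i + k * u' i"]) simp_all
  qed
qed

lemma orthogonal_projection_unique:
  assumes "finite I" "subspace_on I W" "p \<in> W" "q \<in> W"
    and "\<forall>w\<in>W. inner_on I (\<lambda>i. x i - p i) w = 0"
    and "\<forall>w\<in>W. inner_on I (\<lambda>i. x i - q i) w = 0"
  shows "p = q"
proof (rule ccontr)
  assume "p \<noteq> q"
  define d where "d = (\<lambda>i. p i - q i)"
  have dW: "d \<in> W" unfolding d_def by (rule subspace_on_diff[OF assms(2-4)])
  obtain s where "p s \<noteq> q s" using \<open>p \<noteq> q\<close> by (meson ext)
  then have ds: "d s \<noteq> 0" unfolding d_def by simp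
  then have "s \<in> I" using subspace_on_vanishes[OF assms(2) dW] by blast
  then have "inner_on I d d > 0" by (rule inner_on_self_pos[of I s d, OF assms(1) _ ds])
  moreover have "inner_on I d d = inner_on I (\<lambda>i. x i - q i) d - inner_on I (\<lambda>i. x i - p i) d"
    unfolding d_def inner_on_diff_left by simp
  ultimately show False using assms(5,6) dW by simp
qed

lemma spectral_proj_inner:
  assumes "finite I" "w \<in> eigenspace_on I M \<theta>"
  shows "inner_on I (spectral_proj I M \<theta> x) w = inner_on I x w"
proof -
  let ?W = "eigenspace_on I M \<theta>"
  obtain p where p: "p \<in> ?W" "\<forall>w\<in>?W. inner_on I (\<lambda>i. x i - p i) w = 0"
    using orthogonal_projection_exists[OF assms(1) order_refl eigenspace_on_subspace]
    by blast
  have "spectral_proj I M \<theta> x = p"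
    unfolding spectral_proj_def
  proof (rule the_equality)
    fix q assume "q \<in> ?W \<and> (\<forall>w\<in>?W. inner_on I (\<lambda>i. x i - q i) w = 0)"
    then show "q = p"
      using orthogonal_projection_unique[OF assms(1) eigenspace_on_subspace _ p(1) _ p(2)] by blast
  qed (use p in blast)
  then show ?thesis using p(2) assms(2) by (simp add: inner_on_diff_left)
qed

lemma strongly_cospectral_inner_abs_eq:
  assumes "finite I" "strongly_cospectral I M x y" "w \<in> eigenspace_on I M \<theta>"
  shows "\<bar>inner_on I x w\<bar> = \<bar>inner_on I y w\<bar>"
proof (cases "w = (\<lambda>_. 0)")
  case True
  then show ?thesis by (simp add: inner_on_def)
next
  case False
  then have "is_eigenvalue_on I M \<theta>" using assms(3) unfolding is_eigenvalue_on_def by blast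
  then have "spectral_proj I M \<theta> x = spectral_proj I M \<theta> y
      \<or> spectral_proj I M \<theta> x = (\<lambda>i. - spectral_proj I M \<theta> y i)"
    using assms(2) unfolding strongly_cospectral_def by blast
  then show ?thesis
    using spectral_proj_inner[OF assms(1,3), of x] spectral_proj_inner[OF assms(1,3), of y]
    by (metis inner_on_neg_left abs_minus_cancel)
qed

definition incidence_apply :: "'v set set \<Rightarrow> ('v set \<Rightarrow> real) \<Rightarrow> 'v \<Rightarrow> real" where
  "incidence_apply E z x = (\<Sum>f\<in>E. if x \<in> f then z f else 0)"

lemma incidence_apply_add_edge:
  assumes "finite E" "e \<in> E"
  shows "incidence_apply E (\<lambda>f. z f + (if f = e then c else 0)) x
    = incidence_apply E z x + (if x \<in> e then c else 0)"
proof -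
  have "incidence_apply E (\<lambda>f. z f + (if f = e then c else 0)) x
      = (\<Sum>f\<in>E. (if x \<in> f then z f else 0) + (if f = e then (if x \<in> e then c else 0) else 0))"
    unfolding incidence_apply_def by (rule sum.cong) auto
  also have "\<dots> = incidence_apply E z x + (if x \<in> e then c else 0)"
    using assms unfolding incidence_apply_def by (simp add: sum.distrib)
  finally show ?thesis .
qed

lemma line_adj_eigenspace_of_incidence_kernel:
  assumes "finite E" and simple: "\<forall>e\<in>E. \<exists>x y. x \<noteq> y \<and> e = {x, y}"
    and "\<forall>f. f \<notin> E \<longrightarrow> z f = 0" and "incidence_apply E z = (\<lambda>_. 0)"
  shows "z \<in> eigenspace_on E (line_adj E) (-2)"
  unfolding eigenspace_on_def
proof (intro CollectI conjI allI impI ballI)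
  fix i assume "i \<notin> E" then show "z i = 0" using assms(3) by auto
next
  fix e assume eE: "e \<in> E"
  then obtain u w where uw: "u \<noteq> w" "e = {u, w}" using simple by blast
  have "(\<Sum>f\<in>E. line_adj E e f * z f)
      = (\<Sum>f\<in>E. (if u \<in> f then z f else 0) + (if w \<in> f then z f else 0)
          - 2 * (if f = e then z f else 0))"
  proof (rule sum.cong)
    fix f assume fE: "f \<in> E"
    then obtain x y where "x \<noteq> y" "f = {x, y}" using simple by blast
    then have "f \<noteq> e \<Longrightarrow> \<not> (u \<in> f \<and> w \<in> f)" using uw by auto
    then show "line_adj E e f * z f = (if u \<in> f then z f else 0) + (if w \<in> f then z f else 0)
        - 2 * (if f = e then z f else 0)"
      using eE fE uw unfolding line_adj_def by auto
  qed simp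
  also have "\<dots> = incidence_apply E z u + incidence_apply E z w - 2 * z e"
    using assms(1) eE unfolding incidence_apply_def
    by (simp add: sum.distrib sum_subtractf sum_distrib_left[symmetric])
  also have "\<dots> = -2 * z e" using assms(4) by simp
  finally show "(\<Sum>f\<in>E. line_adj E e f * z f) = -2 * z e" .
qed

lemma signed_walk_vector:
  fixes \<sigma> :: "'v \<Rightarrow> real"
  assumes "finite E" "Ed \<subseteq> E"
    and proper: "\<forall>y w. {y, w} \<in> E \<longrightarrow> y \<noteq> w \<and> \<sigma> y = - \<sigma> w"
    and "(\<lambda>x y. {x, y} \<in> Ed)\<^sup>*\<^sup>* u v"
  shows "\<exists>z. (\<forall>f. f \<notin> Ed \<longrightarrow> z f = 0) \<and>
    incidence_apply E z = (\<lambda>x. \<sigma> x * (of_bool (x = u) - of_bool (x = v)))"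
  using assms(4)
proof (induction rule: rtranclp_induct)
  case base
  show ?case by (intro exI[of _ "\<lambda>_. 0"]) (simp add: incidence_apply_def)
next
  case (step y w)
  then obtain z where z: "\<forall>f. f \<notin> Ed \<longrightarrow> z f = 0"
    "incidence_apply E z = (\<lambda>x. \<sigma> x * (of_bool (x = u) - of_bool (x = y)))"
    by blast
  have ywE: "{y, w} \<in> E" using step.hyps(2) assms(2) by auto
  then have "y \<noteq> w" "\<sigma> y = - \<sigma> w" using proper by auto
  define z' where "z' = (\<lambda>f. z f + (if f = {y, w} then \<sigma> y else 0))"
  have "\<forall>f. f \<notin> Ed \<longrightarrow> z' f = 0" using z(1) step.hyps(2) unfolding z'_def by auto
  moreover have "incidence_apply E z' x = \<sigma> x * (of_bool (x = u) - of_bool (x = w))" for x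
    unfolding z'_def incidence_apply_add_edge[OF assms(1) ywE] z(2)
    using \<open>y \<noteq> w\<close> \<open>\<sigma> y = - \<sigma> w\<close> by auto
  ultimately show ?case by blast
qed

lemma closed_walk_kernel_vector:
  fixes \<sigma> :: "'v \<Rightarrow> real"
  assumes "finite E" "Ed \<subseteq> E" "{a, b} \<in> E" "{a, b} \<notin> Ed"
    and proper: "\<forall>y w. {y, w} \<in> E \<longrightarrow> y \<noteq> w \<and> \<sigma> y = - \<sigma> w" and "\<sigma> b \<noteq> 0"
    and "(\<lambda>x y. {x, y} \<in> Ed)\<^sup>*\<^sup>* a b"
  shows "\<exists>z. (\<forall>f. f \<notin> insert {a, b} Ed \<longrightarrow> z f = 0) \<and> z {a, b} \<noteq> 0
    \<and> incidence_apply E z = (\<lambda>_. 0)"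
proof -
  obtain z where z: "\<forall>f. f \<notin> Ed \<longrightarrow> z f = 0"
    "incidence_apply E z = (\<lambda>x. \<sigma> x * (of_bool (x = a) - of_bool (x = b)))"
    using signed_walk_vector[OF assms(1,2) proper assms(7)] by blast
  have "a \<noteq> b" "\<sigma> a = - \<sigma> b" using proper assms(3) by auto
  define z' where "z' = (\<lambda>f. z f + (if f = {a, b} then \<sigma> b else 0))"
  have "\<forall>f. f \<notin> insert {a, b} Ed \<longrightarrow> z' f = 0" using z(1) unfolding z'_def by auto
  moreover have "z' {a, b} \<noteq> 0" using z(1) assms(4,6) unfolding z'_def by simp
  moreover have "incidence_apply E z' x = 0" for x
    unfolding z'_def incidence_apply_add_edge[OF assms(1,3)] z(2)
    using \<open>a \<noteq> b\<close> \<open>\<sigma> a = - \<sigma> b\<close> by auto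
  ultimately show ?thesis by blast
qed

lemma simple_graph_edge:
  "simple_graph V E \<Longrightarrow> {x, y} \<in> E \<Longrightarrow> x \<in> V \<and> y \<in> V \<and> x \<noteq> y"
  unfolding simple_graph_def by (fastforce simp: doubleton_eq_iff)

lemma simple_graph_finite_edges:
  assumes "simple_graph V E"
  shows "finite E"
proof -
  have "E \<subseteq> Pow V" using assms unfolding simple_graph_def by auto
  then show ?thesis using assms unfolding simple_graph_def by (meson finite_Pow_iff finite_subset)
qed

lemma bipartite_sign:
  fixes V :: "'v set"
  assumes "simple_graph V E" "bipartite V E"
  obtains \<sigma> :: "'v \<Rightarrow> real"
  where "\<forall>x. \<sigma> x \<noteq> 0" "\<forall>y w. {y, w} \<in> E \<longrightarrow> y \<noteq> w \<and> \<sigma> y = - \<sigma> w"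
proof -
  obtain c :: "'v \<Rightarrow> bool" where c: "\<forall>x\<in>V. \<forall>y\<in>V. {x, y} \<in> E \<longrightarrow> c x \<noteq> c y"
    using assms(2) unfolding bipartite_def by blast
  show ?thesis
  proof (rule that)
    show "\<forall>x. (if c x then 1 else -1) \<noteq> (0::real)" by simp
    show "\<forall>y w. {y, w} \<in> E \<longrightarrow> y \<noteq> w \<and>
        (if c y then 1 else -1) = - (if c w then 1 else -1 :: real)"
      using c simple_graph_edge[OF assms(1)] by fastforce
  qed
qed

theorem mainTheorem13:
  fixes V :: "'v set" and E :: "'v set set" and a b \<alpha> \<beta> :: 'v
  assumes "simple_graph V E"
    and "graph_connected V E"
    and "bipartite V E"
    and "card E \<ge> card V"
    and "{a, b} \<in> E" and "{\<alpha>, \<beta>} \<in> E"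
    and "{a, b} \<noteq> {\<alpha>, \<beta>}"
    and "strongly_cospectral E (line_adj E) (vertex_state {a, b}) (vertex_state {\<alpha>, \<beta>})"
  shows "\<not> graph_connected V (E - {{a, b}, {\<alpha>, \<beta>}})"
proof
  let ?Ed = "E - {{a, b}, {\<alpha>, \<beta>}}"
  assume "graph_connected V ?Ed"
  moreover have "a \<in> V" "b \<in> V" using simple_graph_edge[OF assms(1,5)] by auto
  ultimately have walk: "(\<lambda>x y. {x, y} \<in> ?Ed)\<^sup>*\<^sup>* a b" unfolding graph_connected_def by blast
  have finE: "finite E" by (rule simple_graph_finite_edges[OF assms(1)])
  obtain \<sigma> :: "'v \<Rightarrow> real"
    where "\<forall>x. \<sigma> x \<noteq> 0" and proper: "\<forall>y w. {y, w} \<in> E \<longrightarrow> y \<noteq> w \<and> \<sigma> y = - \<sigma> w"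
    by (rule bipartite_sign[OF assms(1,3)])
  then have "\<sigma> b \<noteq> 0" by blast
  have "{a, b} \<notin> ?Ed" by simp
  from closed_walk_kernel_vector[OF finE Diff_subset assms(5) this proper \<open>\<sigma> b \<noteq> 0\<close> walk]
  obtain z where z: "\<forall>f. f \<notin> insert {a, b} ?Ed \<longrightarrow> z f = 0" "z {a, b} \<noteq> 0"
      "incidence_apply E z = (\<lambda>_. 0)"
    by blast
  have "\<forall>e\<in>E. \<exists>x y. x \<noteq> y \<and> e = {x, y}" using assms(1) unfolding simple_graph_def by blast
  moreover have "\<forall>f. f \<notin> E \<longrightarrow> z f = 0" using z(1) assms(5) by (metis DiffD1 insertE)
  ultimately have "z \<in> eigenspace_on E (line_adj E) (-2)"
    by (rule line_adj_eigenspace_of_incidence_kernel[OF finE _ _ z(3)])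
  then have "\<bar>z {a, b}\<bar> = \<bar>z {\<alpha>, \<beta>}\<bar>"
    using strongly_cospectral_inner_abs_eq[OF finE assms(8)]
    by (simp add: inner_on_vertex_state[OF finE assms(5)] inner_on_vertex_state[OF finE assms(6)])
  moreover have "z {\<alpha>, \<beta>} = 0" using z(1) assms(7) by auto
  ultimately show False using z(2) by simp
qed

end
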